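(* Let $\Omega\subset\mathbb{R}^d$ be a convex polygonal domain, $\mathrm{Wi}>0$, and let $\vec u:\Omega\times[0,T]\to\mathbb{R}^d$ be a given, sufficiently smooth velocity field with $\vec u\cdot\vec n=0$ on $\partial\Omega$, and $\Delta t=T/N$ with $\Delta t\,\|\vec u\|_{C^0([0,T];W^{1,\infty}(\Omega))}<1$; write $t^n=n\Delta t$. Let $\boldsymbol\sigma$ be a sufficiently smooth solution of the Oldroyd-B constitutive law $$\partial_t\boldsymbol\sigma+(\vec u\cdot\nabla)\boldsymbol\sigma-(\nabla\vec u)\boldsymbol\sigma-\boldsymbol\sigma(\nabla\vec u)^T=-\tfrac{1}{\mathrm{Wi}}(\boldsymbol\sigma-\vec I).$$ For $t\in[\Delta t,T]$ set $\vec y^t_{\Delta t}(\vec x)=\vec x-\Delta t\,\vec u(\vec x,t)$, $\vec F^t_{\Delta t}(\vec x)=\vec I+\Delta t\,\nabla\vec u(\vec x,t)$, and for a tensor field $\vec\zeta$ define $$D_{(\vec u,\Delta t)}\vec\zeta(\vec x,t)=\tfrac{1}{\Delta t}\big(\vec\zeta(\vec x,t)-\vec F^t_{\Delta t}(\vec x)\,\vec\zeta(\vec y^t_{\Delta t}(\vec x),t-\Delta t)\,\vec F^t_{\Delta t}(\vec x)^T\big).$$ Consider the semidiscrete scheme: $\vec\Sigma^0=\boldsymbol\sigma^0$ and, for $n\ge1$ (with $t=t^n$), $$\tfrac{1}{\Delta t}\big(\vec\Sigma^n(\vec x)-\vec F^{t}_{\Delta t}(\vec x)\vec\Sigma^{n-1}(\vec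 y^{t}_{\Delta t}(\vec x))\vec F^{t}_{\Delta t}(\vec x)^T\big)=-\tfrac{1}{\mathrm{Wi}}(\vec\Sigma^n(\vec x)-\vec I).$$ Then this semidiscrete scheme is a consistent, first order approximation, in the sense that its local truncation error is $\mathcal{O}(\Delta t^2)$: if one step of the scheme is performed at time $t=t^n$ starting from the exact value $\boldsymbol\sigma(\cdot,t-\Delta t)$ in place of $\vec\Sigma^{n-1}$, the resulting $\vec\Sigma^n$ satisfies $\boldsymbol\sigma(\vec x,t)-\vec\Sigma^n(\vec x)=\mathcal{O}(\Delta t^2)$.
   Context: $(\nabla\vec u)_{ij}=\partial u_i/\partial x_j$; $\vec I$ is the identity tensor; $\mathrm{Wi}$ is the Weissenberg number. *)

theory Defs
  imports "HOL-Analysis.Analysis"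
begin

definition C2_on :: "'a::euclidean_space set \<Rightarrow> ('a \<Rightarrow> 'b::euclidean_space) \<Rightarrow> bool" where
  "C2_on U f \<longleftrightarrow>
     (\<exists>f' f''. (\<forall>z\<in>U. (f has_derivative blinfun_apply (f' z)) (at z)) \<and>
               (\<forall>z\<in>U. (f' has_derivative blinfun_apply (f'' z)) (at z)) \<and>
               continuous_on U f'')"

definition grad_u :: "(real^'d \<Rightarrow> real \<Rightarrow> real^'d) \<Rightarrow> real^'d \<Rightarrow> real \<Rightarrow> real^'d^'d" where
  "grad_u u x t = (\<chi> i j. vector_derivative (\<lambda>s. u (x + s *\<^sub>R axis j 1) t $ i) (at 0))"

definition dt_tensor :: "(real^'d \<Rightarrow> real \<Rightarrow> real^'d^'d) \<Rightarrow> real^'d \<Rightarrow> real \<Rightarrow> real^'d^'d" where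
  "dt_tensor \<sigma> x t = vector_derivative (\<lambda>s. \<sigma> x s) (at t)"

definition conv_tensor :: "(real^'d \<Rightarrow> real \<Rightarrow> real^'d) \<Rightarrow> (real^'d \<Rightarrow> real \<Rightarrow> real^'d^'d)
     \<Rightarrow> real^'d \<Rightarrow> real \<Rightarrow> real^'d^'d" where
  "conv_tensor u \<sigma> x t =
     (\<Sum>j\<in>UNIV. (u x t $ j) *\<^sub>R vector_derivative (\<lambda>s. \<sigma> (x + s *\<^sub>R axis j 1) t) (at 0))"

text \<open>Norm of u in C^0([0,T]; W^{1,infinity}(Omega)): sup over t of
  max(sup_x |u|, sup_x |grad u|) (Euclidean / Frobenius pointwise norms).\<close>
definition norm_C0W1inf :: "(real^'d) set \<Rightarrow> real \<Rightarrow> (real^'d \<Rightarrow> real \<Rightarrow> real^'d) \<Rightarrow> real" where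
  "norm_C0W1inf \<Omega> T u =
     (SUP t\<in>{0..T}. max (SUP x\<in>\<Omega>. norm (u x t)) (SUP x\<in>\<Omega>. norm (grad_u u x t)))"

end

theory Submission
  imports Defs
begin

(* Let y = x - \<Delta>t u(x,t). A second-order Taylor expansion of \<sigma> at (x,t) in the
   characteristic direction (-u, -1) gives
     \<sigma>(y, t - \<Delta>t) = \<sigma> - \<Delta>t (\<partial>\<^sub>t\<sigma> + (u \<cdot> \<nabla>)\<sigma>) + O(\<Delta>t\<^sup>2),
   and the Oldroyd-B law replaces the material derivative by
   (\<nabla>u)\<sigma> + \<sigma>(\<nabla>u)\<^sup>T - (\<sigma> - I)/Wi. Expanding F = I + \<Delta>t \<nabla>u, the terms of
   order \<Delta>t cancel and F \<sigma>(y, t - \<Delta>t) F\<^sup>T = \<sigma> + (\<Delta>t/Wi)(\<sigma> - I) + Q with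
   Q = O(\<Delta>t\<^sup>2); subtracting this from the scheme gives (1 + \<Delta>t/Wi)(\<Sigma> - \<sigma>) = Q.
   The constants are bounds of u, \<sigma> and their derivatives on the compact set
   closure \<Omega> \<times> [0,T], so the segment from (x,t) to (y, t - \<Delta>t) must stay in it:
   since u is tangential to the facets of the polytope and \<Delta>t Lip(u) < 1, the map
   z \<mapsto> z - \<Delta>t u(z) maps closure \<Omega> into itself. *)

section \<open>Matrices\<close>

lemma norm_matrix_vector_mult_le:
  fixes A :: "real^'n^'m"
  shows "norm (A *v x) \<le> norm A * norm x"
proof -
  have "norm (A *v x) = L2_set (\<lambda>i. \<bar>(A *v x) $ i\<bar>) UNIV" by (simp add: norm_vec_def)
  also have "\<dots> \<le> L2_set (\<lambda>i. norm (A $ i) * norm x) UNIV"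
    by (rule L2_set_mono)
       (auto simp: matrix_vector_mul_component intro: Cauchy_Schwarz_ineq2[simplified real_norm_def])
  also have "\<dots> = norm A * norm x"
    using L2_set_left_distrib[of "norm x" "\<lambda>i. norm (A $ i)" UNIV] by (simp add: norm_vec_def)
  finally show ?thesis .
qed

lemma norm_transpose: "norm (transpose (A :: real^'n^'m)) = norm A"
proof -
  have "(norm A)\<^sup>2 = (\<Sum>i\<in>UNIV. \<Sum>j\<in>UNIV. (A $ i $ j)\<^sup>2)" for A :: "real^'n^'m"
    by (simp add: norm_vec_def L2_set_def sum_nonneg)
  moreover have "(norm (transpose A))\<^sup>2 = (\<Sum>i\<in>UNIV. \<Sum>j\<in>UNIV. (A $ j $ i)\<^sup>2)"
    by (simp add: norm_vec_def L2_set_def sum_nonneg transpose_def)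
  ultimately have "(norm (transpose A))\<^sup>2 = (norm A)\<^sup>2"
    using sum.swap[of "\<lambda>i j. (A $ j $ i)\<^sup>2"] by simp
  then show ?thesis by (metis norm_ge_zero power2_eq_iff_nonneg)
qed

lemma norm_matrix_mult_le:
  fixes A :: "real^'n^'m" and B :: "real^'k^'n"
  shows "norm (A ** B) \<le> norm A * norm B"
proof -
  have row: "(A ** B) $ i = transpose B *v (A $ i)" for i
    by (simp add: vec_eq_iff matrix_matrix_mult_def matrix_vector_mult_def transpose_def mult.commute)
  have "norm (A ** B) = L2_set (\<lambda>i. norm ((A ** B) $ i)) UNIV" by (simp add: norm_vec_def)
  also have "\<dots> \<le> L2_set (\<lambda>i. norm B * norm (A $ i)) UNIV"
    by (rule L2_set_mono)
       (use norm_matrix_vector_mult_le[of "transpose B"] in \<open>simp_all add: row norm_transpose\<close>)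
  also have "\<dots> = norm A * norm B"
    using L2_set_right_distrib[of "norm B" "\<lambda>i. norm (A $ i)" UNIV]
    by (simp add: norm_vec_def mult.commute)
  finally show ?thesis .
qed

lemma matrix_add_rdistrib: "((A::real^'n^'m) + B) ** C = A ** C + B ** C"
  by (simp add: matrix_matrix_mult_def vec_eq_iff sum.distrib algebra_simps)

lemma matrix_diff_rdistrib: "((A::real^'n^'m) - B) ** C = A ** C - B ** C"
  by (simp add: matrix_matrix_mult_def vec_eq_iff sum_subtractf algebra_simps)

lemma matrix_diff_ldistrib: "(A::real^'n^'m) ** (B - C) = A ** B - A ** C"
  by (simp add: matrix_matrix_mult_def vec_eq_iff sum_subtractf algebra_simps)

lemma transpose_add: "transpose ((A::real^'n^'m) + B) = transpose A + transpose B"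
  by (simp add: transpose_def vec_eq_iff)

lemma congruence_mat_1_plus:
  fixes G E :: "real^'n^'n"
  shows "(mat 1 + h *\<^sub>R G) ** E ** transpose (mat 1 + h *\<^sub>R G)
         = E + h *\<^sub>R (G ** E + E ** transpose G) + (h * h) *\<^sub>R (G ** E ** transpose G)"
  by (simp add: transpose_add transpose_scalar matrix_add_ldistrib matrix_add_rdistrib
      matrix_scalar_ac scalar_matrix_assoc[symmetric] matrix_mul_assoc algebra_simps)

lemma continuous_on_matrix_mult [continuous_intros]:
  fixes f :: "'a::topological_space \<Rightarrow> real^'n^'m" and g :: "'a \<Rightarrow> real^'k^'n"
  shows "continuous_on S f \<Longrightarrow> continuous_on S g \<Longrightarrow> continuous_on S (\<lambda>z. f z ** g z)"
  unfolding matrix_matrix_mult_def by (intro continuous_intros)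

lemma continuous_on_transpose [continuous_intros]:
  fixes f :: "'a::topological_space \<Rightarrow> real^'n^'m"
  shows "continuous_on S f \<Longrightarrow> continuous_on S (\<lambda>z. transpose (f z))"
  unfolding transpose_def by (intro continuous_intros)

section \<open>Derivatives along lines\<close>

lemma vector_derivative_along_line:
  assumes "(g has_derivative D) (at (p + s *\<^sub>R v))"
  shows "vector_derivative (\<lambda>s. g (p + s *\<^sub>R v)) (at s) = D v"
proof -
  have "((\<lambda>s. p + s *\<^sub>R v) has_derivative (\<lambda>h. h *\<^sub>R v)) (at s)"
    by (auto intro!: derivative_eq_intros)
  from has_derivative_compose[OF this assms]
  have "((\<lambda>s. g (p + s *\<^sub>R v)) has_derivative (\<lambda>h. D (h *\<^sub>R v))) (at s)" .
  moreover have "linear D" by (rule has_derivative_linear[OF assms])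
  ultimately have "((\<lambda>s. g (p + s *\<^sub>R v)) has_derivative (\<lambda>h. h *\<^sub>R D v)) (at s)"
    by (simp add: linear_scale)
  then show ?thesis
    by (simp add: has_vector_derivative_def vector_derivative_at)
qed

lemma blinfun_along_segment_le:
  fixes D :: "'a::real_normed_vector \<Rightarrow> 'a \<Rightarrow>\<^sub>L 'b::real_normed_vector"
  assumes seg: "\<And>s. s \<in> {0..h} \<Longrightarrow> p + s *\<^sub>R v \<in> U"
    and DD: "\<And>z. z \<in> U \<Longrightarrow> (D has_derivative blinfun_apply (DD z)) (at z)"
    and M: "\<And>s. s \<in> {0..h} \<Longrightarrow> norm (DD (p + s *\<^sub>R v)) \<le> M"
    and s: "s \<in> {0..h}"
  shows "norm (D (p + s *\<^sub>R v) v - D p v) \<le> M * (norm v)\<^sup>2 * s"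
proof -
  define D' where "D' r k = DD (p + r *\<^sub>R v) (k *\<^sub>R v) v" for r k
  have "((\<lambda>r. D (p + r *\<^sub>R v) v) has_derivative D' r) (at r within {0..h})"
    if r: "r \<in> {0..h}" for r
  proof -
    have "((\<lambda>r. p + r *\<^sub>R v) has_derivative (\<lambda>k. k *\<^sub>R v)) (at r within {0..h})"
      by (auto intro!: derivative_eq_intros)
    from has_derivative_compose[OF this DD[OF seg[OF r]]]
    show ?thesis
      unfolding D'_def by (rule blinfun.FDERIV[OF _ has_derivative_const, simplified])
  qed
  moreover have "onorm (D' r) \<le> M * (norm v)\<^sup>2" if r: "r \<in> {0..h}" for r
  proof (rule onorm_le)
    fix k :: real
    have "norm (D' r k) \<le> norm (DD (p + r *\<^sub>R v)) * norm (k *\<^sub>R v) * norm v"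
      unfolding D'_def by (meson norm_blinfun mult_right_mono norm_ge_zero order_trans)
    also have "\<dots> \<le> M * norm (k *\<^sub>R v) * norm v"
      using M[OF r] by (intro mult_right_mono) auto
    finally show "norm (D' r k) \<le> M * (norm v)\<^sup>2 * norm k"
      by (simp add: power2_eq_square mult_ac)
  qed
  ultimately have "norm (D (p + s *\<^sub>R v) v - D (p + 0 *\<^sub>R v) v) \<le> M * (norm v)\<^sup>2 * norm (s - 0)"
    using s by (intro differentiable_bound[of "{0..h}"]) auto
  then show ?thesis using s by simp
qed

lemma taylor_second_order_le:
  fixes f :: "'a::real_normed_vector \<Rightarrow> 'b::real_normed_vector"
  assumes seg: "\<And>s. s \<in> {0..h} \<Longrightarrow> p + s *\<^sub>R v \<in> U"
    and D: "\<And>z. z \<in> U \<Longrightarrow> (f has_derivative blinfun_apply (D z)) (at z)"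
    and DD: "\<And>z. z \<in> U \<Longrightarrow> (D has_derivative blinfun_apply (DD z)) (at z)"
    and M: "\<And>s. s \<in> {0..h} \<Longrightarrow> norm (DD (p + s *\<^sub>R v)) \<le> M"
    and h: "0 \<le> h"
  shows "norm (f (p + h *\<^sub>R v) - f p - h *\<^sub>R D p v) \<le> M * (norm v)\<^sup>2 * h\<^sup>2"
proof -
  define \<psi> where "\<psi> s = f (p + s *\<^sub>R v) - s *\<^sub>R D p v" for s
  have "(\<psi> has_derivative (\<lambda>k. k *\<^sub>R (D (p + s *\<^sub>R v) v - D p v))) (at s within {0..h})"
    if s: "s \<in> {0..h}" for s
  proof -
    have "((\<lambda>s. p + s *\<^sub>R v) has_derivative (\<lambda>k. k *\<^sub>R v)) (at s within {0..h})"
      by (auto intro!: derivative_eq_intros)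
    from has_derivative_compose[OF this D[OF seg[OF s]]]
    have "(\<psi> has_derivative (\<lambda>k. D (p + s *\<^sub>R v) (k *\<^sub>R v) - k *\<^sub>R D p v)) (at s within {0..h})"
      unfolding \<psi>_def by (auto intro!: derivative_eq_intros)
    then show ?thesis
      by (simp add: blinfun.scaleR_right scaleR_diff_right)
  qed
  moreover have "onorm (\<lambda>k. k *\<^sub>R (D (p + s *\<^sub>R v) v - D p v)) \<le> M * (norm v)\<^sup>2 * h"
    if s: "s \<in> {0..h}" for s
  proof (rule onorm_le)
    have "0 \<le> M" using M[of 0] h by (auto intro: order_trans[OF norm_ge_zero])
    then have "M * (norm v)\<^sup>2 * s \<le> M * (norm v)\<^sup>2 * h"
      using s by (intro mult_left_mono) auto
    then have "norm (D (p + s *\<^sub>R v) v - D p v) \<le> M * (norm v)\<^sup>2 * h"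
      using blinfun_along_segment_le[OF seg DD M s] by linarith
    then show "norm (k *\<^sub>R (D (p + s *\<^sub>R v) v - D p v)) \<le> M * (norm v)\<^sup>2 * h * norm k" for k
      by (simp add: mult_left_mono mult.commute)
  qed
  ultimately have "norm (\<psi> h - \<psi> 0) \<le> M * (norm v)\<^sup>2 * h * norm (h - 0)"
    using h by (intro differentiable_bound[of "{0..h}"]) auto
  then show ?thesis
    using h by (simp add: \<psi>_def power2_eq_square algebra_simps)
qed

lemma grad_u_eq_matrix:
  assumes "(case_prod u has_derivative blinfun_apply D) (at (x, t))"
  shows "grad_u u x t = matrix (\<lambda>h. D (h, 0))"
proof -
  have "vector_derivative (\<lambda>s. u (x + s *\<^sub>R axis j 1) t $ i) (at 0) = D (axis j 1, 0) $ i" for i j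
  proof -
    have "((\<lambda>z. case_prod u z $ i) has_derivative (\<lambda>h. D h $ i)) (at ((x, t) + 0 *\<^sub>R (axis j 1, 0)))"
      using bounded_linear.has_derivative[OF bounded_linear_vec_nth assms] by simp
    from vector_derivative_along_line[OF this] show ?thesis by simp
  qed
  then show ?thesis by (simp add: grad_u_def matrix_def)
qed

lemma dt_tensor_eq:
  assumes "(case_prod \<sigma> has_derivative blinfun_apply D) (at (x, t))"
  shows "dt_tensor \<sigma> x t = D (0, 1)"
  using vector_derivative_along_line[of "case_prod \<sigma>" D "(x, 0)" t "(0, 1)"] assms
  by (simp add: dt_tensor_def)

lemma conv_tensor_eq:
  assumes "(case_prod \<sigma> has_derivative blinfun_apply D) (at (x, t))"
  shows "conv_tensor u \<sigma> x t = D (u x t, 0)"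
proof -
  have lin: "linear (\<lambda>h. D (h, 0))"
    by (intro bounded_linear.linear bounded_linear_compose[OF blinfun.bounded_linear_right]
        bounded_linear_Pair bounded_linear_ident bounded_linear_zero)
  have "vector_derivative (\<lambda>s. \<sigma> (x + s *\<^sub>R axis j 1) t) (at 0) = D (axis j 1, 0)" for j
    using vector_derivative_along_line[of "case_prod \<sigma>" D "(x, t)" 0 "(axis j 1, 0)"] assms
    by simp
  then have "conv_tensor u \<sigma> x t = (\<Sum>j\<in>UNIV. (u x t $ j) *\<^sub>R D (axis j 1, 0))"
    by (simp add: conv_tensor_def)
  also have "\<dots> = D (\<Sum>j\<in>UNIV. (u x t $ j) *\<^sub>R axis j 1, 0)"
    using linear_sum[OF lin, of "\<lambda>j. (u x t $ j) *\<^sub>R axis j 1" UNIV] linear_scale[OF lin] by simp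
  also have "(\<Sum>j\<in>UNIV. (u x t $ j) *\<^sub>R axis j 1) = u x t"
    using basis_expansion[of "u x t"] by (simp add: scalar_mult_eq_scaleR)
  finally show ?thesis .
qed

section \<open>Tangential fields on polytopes\<close>

lemma halfspaces_feasible_direction:
  fixes a :: "'i \<Rightarrow> 'a::real_inner"
  assumes fin: "finite I" and z: "\<And>i. i \<in> I \<Longrightarrow> a i \<bullet> z \<le> b i"
    and w: "\<And>i. i \<in> I \<Longrightarrow> a i \<bullet> z = b i \<Longrightarrow> a i \<bullet> w = 0"
  obtains s where "0 < s" "\<And>i. i \<in> I \<Longrightarrow> a i \<bullet> (z + s *\<^sub>R w) \<le> b i"
proof -
  define J where "J = {i \<in> I. a i \<bullet> z < b i}"
  have "\<forall>\<^sub>F s in at_right 0. \<forall>i\<in>J. a i \<bullet> (z + s *\<^sub>R w) < b i"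
  proof (rule eventually_ball_finite)
    show "finite J" using fin by (simp add: J_def)
    show "\<forall>i\<in>J. \<forall>\<^sub>F s in at_right 0. a i \<bullet> (z + s *\<^sub>R w) < b i"
    proof
      fix i assume "i \<in> J"
      moreover have "((\<lambda>s. a i \<bullet> (z + s *\<^sub>R w)) \<longlongrightarrow> a i \<bullet> (z + 0 *\<^sub>R w)) (at_right 0)"
        by (intro tendsto_intros)
      ultimately show "\<forall>\<^sub>F s in at_right 0. a i \<bullet> (z + s *\<^sub>R w) < b i"
        by (auto simp: J_def dest: order_tendstoD)
    qed
  qed
  moreover have "\<forall>\<^sub>F s in at_right (0::real). 0 < s"
    by (simp add: eventually_at_right_less)
  ultimately have "\<forall>\<^sub>F s in at_right (0::real). 0 < s \<and> (\<forall>i\<in>J. a i \<bullet> (z + s *\<^sub>R w) < b i)"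
    by (simp add: eventually_conj)
  then obtain s where s: "0 < s" and inactive: "\<And>i. i \<in> J \<Longrightarrow> a i \<bullet> (z + s *\<^sub>R w) < b i"
    using eventually_happens'[OF trivial_limit_at_right_real] by blast
  have "a i \<bullet> (z + s *\<^sub>R w) \<le> b i" if "i \<in> I" for i
    using that inactive[of i] z[OF that] w[OF that] by (force simp: J_def inner_add_right)
  with s that show ?thesis by blast
qed

lemma lipschitz_step_strict_ascent:
  fixes v :: "'a::real_inner \<Rightarrow> 'a"
  assumes lip: "L-lipschitz_on P v" and c: "0 \<le> c" "c * L < 1"
    and z: "z \<in> P" and p: "z + s *\<^sub>R w \<in> P" and s: "0 < s" and "w \<noteq> 0"
    and \<alpha>: "\<alpha> = y + w" "y \<bullet> w = 0" and y_perp: "y \<bullet> (v (z + s *\<^sub>R w) - v z) = 0"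
  shows "\<alpha> \<bullet> (z - c *\<^sub>R v z) < \<alpha> \<bullet> (z + s *\<^sub>R w - c *\<^sub>R v (z + s *\<^sub>R w))"
proof -
  define d where "d = v (z + s *\<^sub>R w) - v z"
  have "norm d \<le> L * (s * norm w)"
    using lipschitz_onD[OF lip p z] s by (simp add: d_def dist_norm)
  have "w \<bullet> d \<le> norm w * norm d"
    by (rule norm_cauchy_schwarz)
  also have "\<dots> \<le> norm w * (L * (s * norm w))"
    using \<open>norm d \<le> L * (s * norm w)\<close> by (rule mult_left_mono) simp
  also have "\<dots> = L * s * (norm w)\<^sup>2"
    by (simp add: power2_eq_square mult_ac)
  finally have "c * (w \<bullet> d) \<le> c * (L * s * (norm w)\<^sup>2)"
    using c(1) by (rule mult_left_mono)
  moreover have "\<alpha> \<bullet> (z + s *\<^sub>R w - c *\<^sub>R v (z + s *\<^sub>R w)) - \<alpha> \<bullet> (z - c *\<^sub>R v z)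
                 = s * (norm w)\<^sup>2 - c * (w \<bullet> d)"
    using \<alpha> y_perp
    by (simp add: d_def inner_diff_right inner_add_right inner_add_left inner_commute
        power2_norm_eq_inner algebra_simps)
  moreover have "0 < s * (norm w)\<^sup>2 * (1 - c * L)"
    using s \<open>w \<noteq> 0\<close> c(2) by simp
  ultimately show ?thesis
    by (simp add: algebra_simps)
qed

text \<open>At a maximiser of \<open>a i0 \<bullet> (z - c v z)\<close>, split \<open>a i0\<close> into a combination of the
  active normals, to which \<open>v\<close> is orthogonal, and a part \<open>w\<close> orthogonal to them. If \<open>w \<noteq> 0\<close>,
  moving along \<open>w\<close> stays feasible and strictly increases the objective.\<close>

lemma halfspaces_tangential_step_max_le:
  fixes a :: "'i \<Rightarrow> 'a::euclidean_space" and v :: "'a \<Rightarrow> 'a"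
  assumes fin: "finite I" and P: "P = {x. \<forall>i\<in>I. a i \<bullet> x \<le> b i}"
    and lip: "L-lipschitz_on P v"
    and tang: "\<And>i z. i \<in> I \<Longrightarrow> z \<in> P \<Longrightarrow> a i \<bullet> z = b i \<Longrightarrow> a i \<bullet> v z = 0"
    and c: "0 \<le> c" "c * L < 1"
    and i0: "i0 \<in> I" and zs: "zs \<in> P"
    and max: "\<And>z. z \<in> P \<Longrightarrow> a i0 \<bullet> (z - c *\<^sub>R v z) \<le> a i0 \<bullet> (zs - c *\<^sub>R v zs)"
  shows "a i0 \<bullet> (zs - c *\<^sub>R v zs) \<le> b i0"
proof -
  define J where "J = {i \<in> I. a i \<bullet> zs = b i}"
  obtain y w where y: "y \<in> span (a ` J)" and w: "\<And>q. q \<in> span (a ` J) \<Longrightarrow> orthogonal w q"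
    and a_i0: "a i0 = y + w"
    using orthogonal_subspace_decomp_exists by blast
  have v_perp: "v z \<bullet> q = 0"
    if "z \<in> P" "\<And>i. i \<in> J \<Longrightarrow> a i \<bullet> z = b i" "q \<in> span (a ` J)" for z q
    using orthogonal_to_span[OF that(3), of "v z"] that tang
    by (auto simp: J_def orthogonal_def inner_commute)
  have "w = 0"
  proof (rule ccontr)
    assume "w \<noteq> 0"
    have w_active: "a i \<bullet> w = 0" if "i \<in> J" for i
      using w[of "a i"] that by (simp add: orthogonal_def span_base inner_commute)
    obtain s where s: "0 < s" and "\<And>i. i \<in> I \<Longrightarrow> a i \<bullet> (zs + s *\<^sub>R w) \<le> b i"
      using halfspaces_feasible_direction[OF fin, of a zs b w] zs w_active by (auto simp: P J_def)
    then have p: "zs + s *\<^sub>R w \<in> P" by (simp add: P)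
    have "y \<bullet> (v (zs + s *\<^sub>R w) - v zs) = 0"
      using v_perp[OF p _ y] v_perp[OF zs _ y] w_active
      by (simp add: J_def inner_diff_right inner_add_right inner_commute)
    moreover have "y \<bullet> w = 0"
      using w[OF y] by (simp add: orthogonal_def inner_commute)
    ultimately have "a i0 \<bullet> (zs - c *\<^sub>R v zs) < a i0 \<bullet> (zs + s *\<^sub>R w - c *\<^sub>R v (zs + s *\<^sub>R w))"
      by (intro lipschitz_step_strict_ascent[OF lip c zs p s \<open>w \<noteq> 0\<close> a_i0])
    with max[OF p] show False by simp
  qed
  then have "v zs \<bullet> a i0 = 0"
    using v_perp[OF zs _ y] a_i0 by (simp add: J_def)
  then show ?thesis
    using zs i0 by (simp add: P inner_diff_right inner_commute)
qed

lemma halfspaces_tangential_step_mem: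
  fixes a :: "'i \<Rightarrow> 'a::euclidean_space" and v :: "'a \<Rightarrow> 'a"
  assumes fin: "finite I" and P: "P = {x. \<forall>i\<in>I. a i \<bullet> x \<le> b i}" and "compact P"
    and lip: "L-lipschitz_on P v"
    and tang: "\<And>i z. i \<in> I \<Longrightarrow> z \<in> P \<Longrightarrow> a i \<bullet> z = b i \<Longrightarrow> a i \<bullet> v z = 0"
    and c: "0 \<le> c" "c * L < 1" and x: "x \<in> P"
  shows "x - c *\<^sub>R v x \<in> P"
proof -
  have "a i \<bullet> (x - c *\<^sub>R v x) \<le> b i" if i: "i \<in> I" for i
  proof -
    have "continuous_on P (\<lambda>z. a i \<bullet> (z - c *\<^sub>R v z))"
      using lipschitz_on_continuous_on[OF lip] by (intro continuous_intros)
    then obtain zs where zs: "zs \<in> P" and max: "\<And>z. z \<in> P \<Longrightarrow> a i \<bullet> (z - c *\<^sub>R v z) \<le> a i \<bullet> (zs - c *\<^sub>R v zs)"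
      using continuous_attains_sup[OF \<open>compact P\<close>] x by blast
    show ?thesis
      using halfspaces_tangential_step_max_le[OF fin P lip tang c i zs max] max[OF x] by linarith
  qed
  then show ?thesis by (simp add: P)
qed

lemma polytope_tangential_step_mem:
  fixes P :: "'a::euclidean_space set" and v :: "'a \<Rightarrow> 'a"
  assumes poly: "polytope P" and int: "interior P \<noteq> {}" and lip: "L-lipschitz_on P v"
    and tang: "\<And>F a b. F facet_of P \<Longrightarrow> a \<noteq> 0 \<Longrightarrow> P \<subseteq> {x. a \<bullet> x \<le> b}
                 \<Longrightarrow> F = P \<inter> {x. a \<bullet> x = b} \<Longrightarrow> \<forall>x\<in>F. a \<bullet> v x = 0"
    and c: "0 \<le> c" "c * L < 1" and x: "x \<in> P"
  shows "x - c *\<^sub>R v x \<in> P"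
proof -
  obtain F where fin: "finite F" and seq: "P = affine hull P \<inter> \<Inter>F"
    and "\<And>h. h \<in> F \<Longrightarrow> \<exists>a b. a \<noteq> 0 \<and> h = {x. a \<bullet> x \<le> b}"
    and min: "\<And>F'. F' \<subset> F \<Longrightarrow> P \<subset> affine hull P \<inter> \<Inter>F'"
    using polytope_imp_polyhedron[OF poly] by (simp add: polyhedron_Int_affine_minimal) meson
  then obtain a b where ab: "\<And>h. h \<in> F \<Longrightarrow> a h \<noteq> 0 \<and> h = {x. a h \<bullet> x \<le> b h}"
    by metis
  have "affine hull P = UNIV"
    using int affine_hull_nonempty_interior by blast
  then have P: "P = {x. \<forall>h\<in>F. a h \<bullet> x \<le> b h}"
    using seq ab by auto
  show ?thesis
  proof (rule halfspaces_tangential_step_mem[OF fin P polytope_imp_compact[OF poly] lip _ c x])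
    fix h z assume h: "h \<in> F" and z: "z \<in> P" "a h \<bullet> z = b h"
    have "(P \<inter> {x. a h \<bullet> x = b h}) facet_of P"
      using facet_of_polyhedron_explicit[OF fin seq ab min] h by blast
    moreover have "P \<subseteq> {x. a h \<bullet> x \<le> b h}"
      using P h by blast
    ultimately show "a h \<bullet> v z = 0"
      using tang ab h z by blast
  qed
qed

section \<open>Consistency of the Oldroyd-B scheme\<close>

lemma oldroyd_step_error_le:
  fixes \<sigma>0 E G S D\<sigma> R :: "real^'n^'n"
  assumes dt: "0 < dt" and Wi: "0 < Wi"
    and oldroyd: "D\<sigma> - G ** \<sigma>0 - \<sigma>0 ** transpose G = - (1 / Wi) *\<^sub>R (\<sigma>0 - mat 1)"
    and taylor: "E = \<sigma>0 - dt *\<^sub>R D\<sigma> + R"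
    and scheme: "(1 / dt) *\<^sub>R (S - (mat 1 + dt *\<^sub>R G) ** E ** transpose (mat 1 + dt *\<^sub>R G))
                 = - (1 / Wi) *\<^sub>R (S - mat 1)"
  shows "norm (\<sigma>0 - S) \<le> norm R + 2 * dt * norm G * norm (E - \<sigma>0) + dt\<^sup>2 * (norm G)\<^sup>2 * norm E"
proof -
  define Q where "Q = R + dt *\<^sub>R (G ** (E - \<sigma>0) + (E - \<sigma>0) ** transpose G)
                      + (dt * dt) *\<^sub>R (G ** E ** transpose G)"
  have "D\<sigma> = (D\<sigma> - G ** \<sigma>0 - \<sigma>0 ** transpose G) + G ** \<sigma>0 + \<sigma>0 ** transpose G"
    by simp
  also have "\<dots> = G ** \<sigma>0 + \<sigma>0 ** transpose G - (1 / Wi) *\<^sub>R (\<sigma>0 - mat 1)"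
    unfolding oldroyd by simp
  finally have D\<sigma>: "D\<sigma> = \<dots>" .
  have E: "E = \<sigma>0 + (dt / Wi) *\<^sub>R (\<sigma>0 - mat 1) + R - dt *\<^sub>R (G ** \<sigma>0 + \<sigma>0 ** transpose G)"
    unfolding taylor D\<sigma> by (simp add: algebra_simps)
  define FEF where "FEF = (mat 1 + dt *\<^sub>R G) ** E ** transpose (mat 1 + dt *\<^sub>R G)"
  have FEF: "FEF = \<sigma>0 + (dt / Wi) *\<^sub>R (\<sigma>0 - mat 1) + Q"
    unfolding FEF_def congruence_mat_1_plus Q_def matrix_diff_ldistrib matrix_diff_rdistrib
    by (subst (1) E) (simp add: algebra_simps)
  have "S - FEF = dt *\<^sub>R ((1 / dt) *\<^sub>R (S - FEF))"
    using dt by simp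
  also have "\<dots> = - (dt / Wi) *\<^sub>R (S - mat 1)"
    using scheme by (simp add: FEF_def)
  finally have "Q = (1 + dt / Wi) *\<^sub>R (S - \<sigma>0)"
    unfolding FEF by (simp add: algebra_simps)
  moreover have "1 \<le> 1 + dt / Wi" using dt Wi by simp
  ultimately have "norm (\<sigma>0 - S) \<le> norm Q"
    by (simp add: norm_minus_commute mult_le_cancel_right1)
  also have "\<dots> \<le> norm R + norm (dt *\<^sub>R (G ** (E - \<sigma>0) + (E - \<sigma>0) ** transpose G))
                  + norm ((dt * dt) *\<^sub>R (G ** E ** transpose G))"
    unfolding Q_def by (intro norm_triangle_le add_right_mono norm_triangle_ineq)
  also have "\<dots> = norm R + dt * norm (G ** (E - \<sigma>0) + (E - \<sigma>0) ** transpose G)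
                  + (dt * dt) * norm (G ** E ** transpose G)"
    using dt by simp
  also have "\<dots> \<le> norm R + dt * (2 * (norm G * norm (E - \<sigma>0)))
                  + (dt * dt) * (norm G * norm E * norm G)"
  proof -
    have "norm (G ** (E - \<sigma>0) + (E - \<sigma>0) ** transpose G) \<le> 2 * (norm G * norm (E - \<sigma>0))"
      using norm_triangle_ineq[of "G ** (E - \<sigma>0)" "(E - \<sigma>0) ** transpose G"]
        norm_matrix_mult_le[of G "E - \<sigma>0"] norm_matrix_mult_le[of "E - \<sigma>0" "transpose G"]
      by (simp add: norm_transpose mult.commute)
    moreover have "norm (G ** E ** transpose G) \<le> norm G * norm E * norm G"
      using norm_matrix_mult_le[of "G ** E" "transpose G"] norm_matrix_mult_le[of G E]
      by (simp add: norm_transpose) (meson mult_right_mono norm_ge_zero order_trans)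
    ultimately show ?thesis
      using dt by (intro add_mono order_refl mult_left_mono) simp_all
  qed
  finally show ?thesis
    by (simp add: power2_eq_square algebra_simps)
qed

lemma norm_grad_u_le_norm_C0W1inf:
  assumes "\<Omega> \<noteq> {}"
    and bound: "\<And>x t. x \<in> \<Omega> \<Longrightarrow> t \<in> {0..T} \<Longrightarrow> norm (u x t) \<le> M \<and> norm (grad_u u x t) \<le> M"
    and x: "x \<in> \<Omega>" and t: "t \<in> {0..T}"
  shows "norm (grad_u u x t) \<le> norm_C0W1inf \<Omega> T u"
proof -
  define f where "f s = max (SUP x\<in>\<Omega>. norm (u x s)) (SUP x\<in>\<Omega>. norm (grad_u u x s))" for s
  have bdd_grad: "bdd_above ((\<lambda>x. norm (grad_u u x s)) ` \<Omega>)" if "s \<in> {0..T}" for s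
    using bound that by (intro bdd_aboveI2[where M=M]) auto
  have "f s \<le> M" if "s \<in> {0..T}" for s
    unfolding f_def using bound that \<open>\<Omega> \<noteq> {}\<close> by (auto intro!: cSUP_least)
  then have bdd_f: "bdd_above (f ` {0..T})"
    by (intro bdd_aboveI2[where M=M])
  have "norm (grad_u u x t) \<le> (SUP x\<in>\<Omega>. norm (grad_u u x t))"
    by (rule cSUP_upper[OF x bdd_grad[OF t]])
  also have "\<dots> \<le> f t" unfolding f_def by simp
  also have "\<dots> \<le> (SUP s\<in>{0..T}. f s)" by (rule cSUP_upper[OF t bdd_f])
  finally show ?thesis unfolding norm_C0W1inf_def f_def .
qed

lemma continuous_on_compact_norm_bound:
  fixes f :: "'a::topological_space \<Rightarrow> 'b::real_normed_vector"
  assumes "compact K" "continuous_on K f"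
  obtains M where "0 \<le> M" "\<And>z. z \<in> K \<Longrightarrow> norm (f z) \<le> M"
  using compact_imp_bounded[OF compact_continuous_image[OF assms(2,1)]]
  unfolding bounded_pos by (meson imageI less_imp_le that)

locale oldroyd_b =
  fixes \<Omega> :: "(real^'d) set" and u :: "real^'d \<Rightarrow> real \<Rightarrow> real^'d"
    and \<sigma> :: "real^'d \<Rightarrow> real \<Rightarrow> real^'d^'d" and T Wi :: real
    and U :: "((real^'d) \<times> real) set"
    and uD :: "(real^'d) \<times> real \<Rightarrow> ((real^'d) \<times> real) \<Rightarrow>\<^sub>L (real^'d)"
    and \<sigma>D :: "(real^'d) \<times> real \<Rightarrow> ((real^'d) \<times> real) \<Rightarrow>\<^sub>L (real^'d^'d)"
    and \<sigma>DD :: "(real^'d) \<times> real \<Rightarrow> ((real^'d) \<times> real) \<Rightarrow>\<^sub>L (((real^'d) \<times> real) \<Rightarrow>\<^sub>L (real^'d^'d))"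
  assumes open_\<Omega>: "open \<Omega>" and convex_\<Omega>: "convex \<Omega>" and \<Omega>_nonempty: "\<Omega> \<noteq> {}"
    and polytope_\<Omega>: "polytope (closure \<Omega>)"
    and Wi_pos: "0 < Wi" and T_pos: "0 < T"
    and K_subset_U: "closure \<Omega> \<times> {0..T} \<subseteq> U"
    and u_deriv: "\<And>z. z \<in> U \<Longrightarrow> (case_prod u has_derivative blinfun_apply (uD z)) (at z)"
    and uD_cont: "continuous_on U uD"
    and \<sigma>_deriv: "\<And>z. z \<in> U \<Longrightarrow> (case_prod \<sigma> has_derivative blinfun_apply (\<sigma>D z)) (at z)"
    and \<sigma>D_deriv: "\<And>z. z \<in> U \<Longrightarrow> (\<sigma>D has_derivative blinfun_apply (\<sigma>DD z)) (at z)"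
    and \<sigma>DD_cont: "continuous_on U \<sigma>DD"
    and tangential: "\<And>F a b t. F facet_of closure \<Omega> \<Longrightarrow> a \<noteq> 0 \<Longrightarrow>
                      closure \<Omega> \<subseteq> {x. a \<bullet> x \<le> b} \<Longrightarrow> F = closure \<Omega> \<inter> {x. a \<bullet> x = b} \<Longrightarrow>
                      t \<in> {0..T} \<Longrightarrow> \<forall>x\<in>F. a \<bullet> u x t = 0"
    and oldroyd: "\<And>x t. x \<in> \<Omega> \<Longrightarrow> t \<in> {0<..<T} \<Longrightarrow>
                   dt_tensor \<sigma> x t + conv_tensor u \<sigma> x t
                   - grad_u u x t ** \<sigma> x t - \<sigma> x t ** transpose (grad_u u x t)
                   = - (1 / Wi) *\<^sub>R (\<sigma> x t - mat 1)"
begin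

abbreviation K where "K \<equiv> closure \<Omega> \<times> {0..T}"

abbreviation L where "L \<equiv> norm_C0W1inf \<Omega> T u"

lemma compact_K: "compact K"
  using polytope_\<Omega> by (intro compact_Times polytope_imp_compact compact_Icc)

lemma mem_U: "x \<in> closure \<Omega> \<Longrightarrow> t \<in> {0..T} \<Longrightarrow> (x, t) \<in> U"
  using K_subset_U by blast

lemma continuous_on_u: "continuous_on U (case_prod u)"
  using u_deriv has_derivative_continuous by (blast intro: continuous_at_imp_continuous_on)

lemma continuous_on_\<sigma>: "continuous_on U (case_prod \<sigma>)"
  using \<sigma>_deriv has_derivative_continuous by (blast intro: continuous_at_imp_continuous_on)

lemma continuous_on_\<sigma>D: "continuous_on U \<sigma>D"
  using \<sigma>D_deriv has_derivative_continuous by (blast intro: continuous_at_imp_continuous_on)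

lemma grad_u_eq: "(x, t) \<in> U \<Longrightarrow> grad_u u x t = matrix (\<lambda>h. uD (x, t) (h, 0))"
  using grad_u_eq_matrix u_deriv by blast

lemma grad_u_mult:
  assumes "(x, t) \<in> U"
  shows "grad_u u x t *v h = uD (x, t) (h, 0)"
proof -
  have "bounded_linear (\<lambda>h. uD (x, t) (h, 0))"
    by (intro bounded_linear_compose[OF blinfun.bounded_linear_right]
        bounded_linear_Pair bounded_linear_ident bounded_linear_zero)
  then show ?thesis
    using grad_u_eq[OF assms] matrix_vector_mul(3) by metis
qed

lemma continuous_on_grad_u: "continuous_on U (\<lambda>z. grad_u u (fst z) (snd z))"
proof (rule continuous_on_eq)
  show "continuous_on U (\<lambda>z. matrix (\<lambda>h. uD z (h, 0)))"
    unfolding matrix_def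
    by (intro continuous_on_vec_lambda continuous_on_component
        blinfun.continuous_on[OF uD_cont] continuous_on_const)
qed (auto simp: grad_u_eq)

definition bounded_by :: "real \<Rightarrow> bool" where
  "bounded_by M \<longleftrightarrow> 0 \<le> M \<and>
     (\<forall>z\<in>K. norm (case_prod u z) \<le> M \<and> norm (case_prod \<sigma> z) \<le> M
            \<and> norm (grad_u u (fst z) (snd z)) \<le> M \<and> norm (\<sigma>D z) \<le> M \<and> norm (\<sigma>DD z) \<le> M)"

lemma bounded_by_exists: obtains M where "bounded_by M"
proof -
  define p where "p z = (case_prod u z, case_prod \<sigma> z, grad_u u (fst z) (snd z), \<sigma>D z, \<sigma>DD z)" for z
  have "continuous_on U p"
    unfolding p_def
    by (intro continuous_on_Pair continuous_on_u continuous_on_\<sigma> continuous_on_grad_u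
        continuous_on_\<sigma>D \<sigma>DD_cont)
  then obtain M where M: "0 \<le> M" "\<And>z. z \<in> K \<Longrightarrow> norm (p z) \<le> M"
    using continuous_on_compact_norm_bound[OF compact_K] continuous_on_subset[OF _ K_subset_U] by metis
  have "norm (case_prod u z) \<le> norm (p z)" "norm (case_prod \<sigma> z) \<le> norm (p z)"
    "norm (grad_u u (fst z) (snd z)) \<le> norm (p z)" "norm (\<sigma>D z) \<le> norm (p z)"
    "norm (\<sigma>DD z) \<le> norm (p z)" for z
    unfolding p_def by (meson norm_fst_le norm_snd_le order_trans)+
  then have "bounded_by M"
    unfolding bounded_by_def using M by (meson order_trans)
  then show ?thesis by (rule that)
qed

lemma norm_grad_u_le:
  assumes "x \<in> \<Omega>" "t \<in> {0..T}"
  shows "norm (grad_u u x t) \<le> L"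
proof -
  obtain M where M: "bounded_by M" by (rule bounded_by_exists)
  show ?thesis
  proof (rule norm_grad_u_le_norm_C0W1inf[OF \<Omega>_nonempty _ assms])
    fix x t assume "x \<in> \<Omega>" "t \<in> {0..T}"
    then show "norm (u x t) \<le> M \<and> norm (grad_u u x t) \<le> M"
      using M closure_subset by (fastforce simp: bounded_by_def)
  qed
qed

lemma L_nonneg: "0 \<le> L"
proof -
  obtain x where "x \<in> \<Omega>" using \<Omega>_nonempty by blast
  then have "norm (grad_u u x 0) \<le> L" using T_pos by (intro norm_grad_u_le) auto
  then show ?thesis by (rule order_trans[OF norm_ge_zero])
qed

lemma lipschitz_u:
  assumes t: "t \<in> {0..T}"
  shows "L-lipschitz_on (closure \<Omega>) (\<lambda>x. u x t)"
proof (rule lipschitz_on_closure)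
  show "continuous_on (closure \<Omega>) (\<lambda>x. u x t)"
    using continuous_on_compose2[OF continuous_on_u, of "closure \<Omega>" "\<lambda>x. (x, t)"] mem_U t
    by (force intro: continuous_intros)
  show "L-lipschitz_on \<Omega> (\<lambda>x. u x t)"
  proof (rule lipschitz_onI)
    fix x y assume "x \<in> \<Omega>" "y \<in> \<Omega>"
    have "norm (u x t - u y t) \<le> L * norm (x - y)"
    proof (rule differentiable_bound[OF convex_\<Omega> _ _ \<open>x \<in> \<Omega>\<close> \<open>y \<in> \<Omega>\<close>])
      fix z assume z: "z \<in> \<Omega>"
      then have zt: "(z, t) \<in> U" using mem_U t closure_subset by blast
      have "((\<lambda>z. (z, t)) has_derivative (\<lambda>h. (h, 0))) (at z within \<Omega>)"
        by (auto intro!: derivative_eq_intros)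
      from has_derivative_compose[OF this u_deriv[OF zt]]
      show "((\<lambda>x. u x t) has_derivative (\<lambda>h. uD (z, t) (h, 0))) (at z within \<Omega>)"
        by simp
      show "onorm (\<lambda>h. uD (z, t) (h, 0)) \<le> L"
      proof (rule onorm_le)
        fix h
        have "norm (uD (z, t) (h, 0)) \<le> norm (grad_u u z t) * norm h"
          unfolding grad_u_mult[OF zt, symmetric] by (rule norm_matrix_vector_mult_le)
        also have "\<dots> \<le> L * norm h"
          using norm_grad_u_le[OF z t] by (simp add: mult_right_mono)
        finally show "norm (uD (z, t) (h, 0)) \<le> L * norm h" .
      qed
    qed
    then show "dist (u x t) (u y t) \<le> L * dist x y" by (simp add: dist_norm)
  qed (rule L_nonneg)
qed

lemma characteristic_foot_mem:
  assumes "t \<in> {0..T}" "0 \<le> c" "c * L < 1" "x \<in> closure \<Omega>"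
  shows "x - c *\<^sub>R u x t \<in> closure \<Omega>"
proof (rule polytope_tangential_step_mem[OF polytope_\<Omega> _ lipschitz_u])
  show "interior (closure \<Omega>) \<noteq> {}"
    using \<Omega>_nonempty interior_maximal[OF closure_subset open_\<Omega>] by blast
qed (use assms tangential in auto)

lemma material_derivative_eq:
  "(x, t) \<in> U \<Longrightarrow> dt_tensor \<sigma> x t + conv_tensor u \<sigma> x t = \<sigma>D (x, t) (u x t, 1)"
  using dt_tensor_eq[OF \<sigma>_deriv] conv_tensor_eq[OF \<sigma>_deriv] blinfun.add_right[of "\<sigma>D (x, t)" "(u x t, 0)" "(0, 1)"]
  by simp

text \<open>The law is assumed only on \<open>\<Omega> \<times> (0,T)\<close>, but the last step of the scheme uses it
  at \<open>t = T\<close>.\<close>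

lemma oldroyd_on_K:
  assumes "(x, t) \<in> K"
  shows "\<sigma>D (x, t) (u x t, 1) - grad_u u x t ** \<sigma> x t - \<sigma> x t ** transpose (grad_u u x t)
         = - (1 / Wi) *\<^sub>R (\<sigma> x t - mat 1)"
proof -
  define \<Phi> where "\<Phi> z = \<sigma>D z (case_prod u z, 1) - grad_u u (fst z) (snd z) ** case_prod \<sigma> z
      - case_prod \<sigma> z ** transpose (grad_u u (fst z) (snd z)) + (1 / Wi) *\<^sub>R (case_prod \<sigma> z - mat 1)" for z
  have "continuous_on U \<Phi>"
    unfolding \<Phi>_def
    by (intro continuous_on_diff continuous_on_add continuous_on_matrix_mult continuous_on_transpose
        continuous_on_scaleR continuous_on_const continuous_on_\<sigma> continuous_on_grad_u
        blinfun.continuous_on[OF continuous_on_\<sigma>D] continuous_on_Pair continuous_on_u)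
  then have "continuous_on (closure (\<Omega> \<times> {0<..<T})) \<Phi>"
    using T_pos continuous_on_subset[OF _ K_subset_U] by (simp add: closure_Times)
  moreover have "\<Phi> z = 0" if z_in: "z \<in> \<Omega> \<times> {0<..<T}" for z
  proof -
    obtain y s where z: "z = (y, s)" "y \<in> \<Omega>" "s \<in> {0<..<T}" using z_in by blast
    then have "(y, s) \<in> U" using mem_U closure_subset by fastforce
    then show ?thesis
      using oldroyd[OF z(2,3)] material_derivative_eq by (simp add: z \<Phi>_def algebra_simps)
  qed
  moreover have "(x, t) \<in> closure (\<Omega> \<times> {0<..<T})"
    using assms T_pos by (simp add: closure_Times)
  ultimately have "\<Phi> (x, t) = 0"
    by (rule continuous_constant_on_closure)
  then show ?thesis by (simp add: \<Phi>_def algebra_simps)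
qed

lemma characteristic_taylor:
  assumes M: "bounded_by M" and x: "x \<in> closure \<Omega>"
    and dt: "0 \<le> dt" "dt \<le> t" "t \<le> T" "dt * L < 1"
  shows "norm (\<sigma> (x - dt *\<^sub>R u x t) (t - dt) - \<sigma> x t + dt *\<^sub>R \<sigma>D (x, t) (u x t, 1))
         \<le> M * (M + 1)\<^sup>2 * dt\<^sup>2"
proof -
  define v where "v = (- u x t, - 1 :: real)"
  have foot: "(x, t) + s *\<^sub>R v = (x - s *\<^sub>R u x t, t - s)" for s
    by (simp add: v_def)
  have seg: "(x, t) + s *\<^sub>R v \<in> K" if s: "s \<in> {0..dt}" for s
  proof -
    have "s * L \<le> dt * L" using s L_nonneg by (simp add: mult_right_mono)
    then have "x - s *\<^sub>R u x t \<in> closure \<Omega>"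
      using s dt x by (intro characteristic_foot_mem) auto
    then show ?thesis using s dt unfolding foot by auto
  qed
  have \<sigma>DD_bound: "norm (\<sigma>DD ((x, t) + s *\<^sub>R v)) \<le> M" if "s \<in> {0..dt}" for s
    using M seg[OF that] unfolding foot by (simp add: bounded_by_def)
  have seg_U: "(x, t) + s *\<^sub>R v \<in> U" if "s \<in> {0..dt}" for s
    by (rule subsetD[OF K_subset_U seg[OF that]])
  have "norm (u x t) \<le> M" using M x dt by (auto simp: bounded_by_def)
  then have "norm v \<le> M + 1"
    using norm_Pair_le[of "- u x t" "- 1 :: real"] by (simp add: v_def)
  then have nv: "(norm v)\<^sup>2 \<le> (M + 1)\<^sup>2"
    by (simp add: power_mono)
  have D\<sigma>_v: "\<sigma>D (x, t) v = - \<sigma>D (x, t) (u x t, 1)"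
    using blinfun.minus_right[of "\<sigma>D (x, t)" "(u x t, 1)"] by (simp add: v_def)
  have "norm (case_prod \<sigma> ((x, t) + dt *\<^sub>R v) - case_prod \<sigma> (x, t) - dt *\<^sub>R \<sigma>D (x, t) v)
        \<le> M * (norm v)\<^sup>2 * dt\<^sup>2"
    by (rule taylor_second_order_le[OF seg_U \<sigma>_deriv \<sigma>D_deriv \<sigma>DD_bound dt(1)])
  also have "\<dots> \<le> M * (M + 1)\<^sup>2 * dt\<^sup>2"
    using nv M by (simp add: bounded_by_def mult_left_mono mult_right_mono)
  finally show ?thesis
    by (simp add: foot D\<sigma>_v)
qed

lemma characteristic_difference_le:
  assumes M: "bounded_by M" and x: "x \<in> closure \<Omega>"
    and dt: "0 \<le> dt" "dt \<le> t" "t \<le> T" "dt * L < 1"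
  shows "norm (\<sigma> (x - dt *\<^sub>R u x t) (t - dt) - \<sigma> x t) \<le> M * (M + 1)\<^sup>2 * (T + 1) * dt"
proof -
  define B where "B = M * (M + 1)\<^sup>2"
  define D\<sigma> where "D\<sigma> = \<sigma>D (x, t) (u x t, 1)"
  have M0: "0 \<le> M" and "norm (\<sigma>D (x, t)) \<le> M" and "norm (u x t) \<le> M"
    using M x dt by (auto simp: bounded_by_def)
  then have "norm D\<sigma> \<le> M * (M + 1)"
    using norm_blinfun[of "\<sigma>D (x, t)" "(u x t, 1)"] norm_Pair_le[of "u x t" "1::real"]
    by (simp add: D\<sigma>_def) (meson add_right_mono mult_mono norm_ge_zero order_trans)
  also have "\<dots> \<le> B"
    using M0 mult_left_mono[of 1 "M + 1" "M * (M + 1)"] by (simp add: B_def power2_eq_square mult.assoc)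
  finally have "dt * norm D\<sigma> \<le> dt * B"
    using dt(1) by (rule mult_left_mono)
  moreover have "B * dt\<^sup>2 \<le> dt * (B * T)"
    using dt M0 by (simp add: B_def power2_eq_square mult_left_mono mult.left_commute)
  moreover have "norm (\<sigma> (x - dt *\<^sub>R u x t) (t - dt) - \<sigma> x t)
                 \<le> norm (\<sigma> (x - dt *\<^sub>R u x t) (t - dt) - \<sigma> x t + dt *\<^sub>R D\<sigma>) + dt * norm D\<sigma>"
    using dt(1) norm_triangle_ineq4[of "\<sigma> (x - dt *\<^sub>R u x t) (t - dt) - \<sigma> x t + dt *\<^sub>R D\<sigma>" "dt *\<^sub>R D\<sigma>"]
    by simp
  ultimately show ?thesis
    using characteristic_taylor[OF assms] by (simp add: B_def D\<sigma>_def algebra_simps)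
qed

lemma local_step_error_le:
  assumes M: "bounded_by M" and dt: "0 < dt" "dt \<le> t" "t \<le> T" "dt * L < 1" and x: "x \<in> \<Omega>"
    and scheme: "(1 / dt) *\<^sub>R (S - (mat 1 + dt *\<^sub>R grad_u u x t) ** \<sigma> (x - dt *\<^sub>R u x t) (t - dt)
                   ** transpose (mat 1 + dt *\<^sub>R grad_u u x t)) = - (1 / Wi) *\<^sub>R (S - mat 1)"
  shows "norm (\<sigma> x t - S) \<le> 2 * M * (M + 1)\<^sup>2 * (1 + M * (T + 1)) * dt\<^sup>2"
proof -
  define B where "B = M * (M + 1)\<^sup>2"
  define E where "E = \<sigma> (x - dt *\<^sub>R u x t) (t - dt)"
  define D\<sigma> where "D\<sigma> = \<sigma>D (x, t) (u x t, 1)"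
  define R where "R = E - \<sigma> x t + dt *\<^sub>R D\<sigma>"
  have xK: "(x, t) \<in> K" and x': "x \<in> closure \<Omega>"
    using x closure_subset dt by auto
  have M0: "0 \<le> M" and nG: "norm (grad_u u x t) \<le> M"
    using M xK by (auto simp: bounded_by_def)
  have nE: "norm E \<le> M"
    using M characteristic_foot_mem[of t dt x] x' dt L_nonneg by (auto simp: bounded_by_def E_def)
  have nR: "norm R \<le> B * dt\<^sup>2"
    using characteristic_taylor[OF M x' less_imp_le[OF dt(1)] dt(2-4)]
    by (simp add: R_def E_def D\<sigma>_def B_def)
  have nE\<sigma>: "norm (E - \<sigma> x t) \<le> dt * (B * (T + 1))"
    using characteristic_difference_le[OF M x' less_imp_le[OF dt(1)] dt(2-4)]
    by (simp add: E_def B_def mult_ac)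
  have taylor: "E = \<sigma> x t - dt *\<^sub>R D\<sigma> + R"
    by (simp add: R_def)
  have "norm (\<sigma> x t - S)
        \<le> norm R + 2 * dt * norm (grad_u u x t) * norm (E - \<sigma> x t) + dt\<^sup>2 * (norm (grad_u u x t))\<^sup>2 * norm E"
    by (rule oldroyd_step_error_le[OF dt(1) Wi_pos oldroyd_on_K[OF xK, folded D\<sigma>_def] taylor
        scheme[folded E_def]])
  also have "\<dots> \<le> B * dt\<^sup>2 + 2 * dt * M * (dt * (B * (T + 1))) + dt\<^sup>2 * M\<^sup>2 * M"
    using nR nG nE nE\<sigma> dt(1) M0
    by (intro add_mono mult_mono power_mono mult_left_mono) auto
  also have "\<dots> \<le> B * dt\<^sup>2 + 2 * dt * M * (dt * (B * (T + 1))) + dt\<^sup>2 * B"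
  proof -
    have "M\<^sup>2 * M \<le> B"
      using M0 mult_left_mono[OF power_mono[of M "M + 1" 2], of M] by (simp add: B_def mult.commute)
    then have "dt\<^sup>2 * M\<^sup>2 * M \<le> dt\<^sup>2 * B"
      using mult_left_mono[of "M\<^sup>2 * M" B "dt\<^sup>2"] by (simp add: mult.assoc)
    then show ?thesis by (rule add_left_mono)
  qed
  also have "\<dots> = 2 * M * (M + 1)\<^sup>2 * (1 + M * (T + 1)) * dt\<^sup>2"
    by (simp add: B_def power2_eq_square algebra_simps)
  finally show ?thesis .
qed

end

lemma uniform_grid_le:
  assumes "0 < T" "0 < N" "1 \<le> n" "n \<le> N"
  shows "0 < T / real N" "T / real N \<le> real n * (T / real N)" "real n * (T / real N) \<le> T"
  using assms by (auto simp: field_simps)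

theorem proposition2:
  fixes \<Omega> :: "(real^'d) set"
    and u :: "real^'d \<Rightarrow> real \<Rightarrow> real^'d"
    and \<sigma> :: "real^'d \<Rightarrow> real \<Rightarrow> real^'d^'d"
    and T Wi :: real
  assumes dom: "open \<Omega>" "convex \<Omega>" "\<Omega> \<noteq> {}" "polytope (closure \<Omega>)"
    and Wi: "Wi > 0" and T: "T > 0"
    and smooth: "\<exists>U. open U \<and> closure \<Omega> \<times> {0..T} \<subseteq> U
                   \<and> C2_on U (\<lambda>z. u (fst z) (snd z)) \<and> C2_on U (\<lambda>z. \<sigma> (fst z) (snd z))"
    and tangential: "\<And>F a b t. F facet_of closure \<Omega> \<Longrightarrow> a \<noteq> 0 \<Longrightarrow>
                      closure \<Omega> \<subseteq> {x. a \<bullet> x \<le> b} \<Longrightarrow> F = closure \<Omega> \<inter> {x. a \<bullet> x = b} \<Longrightarrow>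
                      t \<in> {0..T} \<Longrightarrow> \<forall>x\<in>F. a \<bullet> u x t = 0"
    and oldroyd: "\<And>x t. x \<in> \<Omega> \<Longrightarrow> t \<in> {0<..<T} \<Longrightarrow>
                   dt_tensor \<sigma> x t + conv_tensor u \<sigma> x t
                   - grad_u u x t ** \<sigma> x t - \<sigma> x t ** transpose (grad_u u x t)
                   = - (1 / Wi) *\<^sub>R (\<sigma> x t - mat 1)"
  shows "\<exists>C. \<forall>N::nat. \<forall>n::nat. \<forall>x S.
           let \<Delta>t = T / real N; t = real n * \<Delta>t;
               F = mat 1 + \<Delta>t *\<^sub>R grad_u u x t;
               y = x - \<Delta>t *\<^sub>R u x t
           in (N > 0 \<and> \<Delta>t * norm_C0W1inf \<Omega> T u < 1 \<and> 1 \<le> n \<and> n \<le> N \<and> x \<in> \<Omega> \<and>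
               (1 / \<Delta>t) *\<^sub>R (S - F ** \<sigma> y (t - \<Delta>t) ** transpose F) = - (1 / Wi) *\<^sub>R (S - mat 1))
              \<longrightarrow> norm (\<sigma> x t - S) \<le> C * \<Delta>t\<^sup>2"
proof -
  obtain U where K_subset_U: "closure \<Omega> \<times> {0..T} \<subseteq> U"
    and "C2_on U (case_prod u)" "C2_on U (case_prod \<sigma>)"
    using smooth unfolding case_prod_beta' by blast
  then obtain uD uDD \<sigma>D \<sigma>DD where
    u_deriv: "\<And>z. z \<in> U \<Longrightarrow> (case_prod u has_derivative blinfun_apply (uD z)) (at z)"
    and uD_deriv: "\<And>z. z \<in> U \<Longrightarrow> (uD has_derivative blinfun_apply (uDD z)) (at z)"
    and \<sigma>_deriv: "\<And>z. z \<in> U \<Longrightarrow> (case_prod \<sigma> has_derivative blinfun_apply (\<sigma>D z)) (at z)"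
    and \<sigma>D_deriv: "\<And>z. z \<in> U \<Longrightarrow> (\<sigma>D has_derivative blinfun_apply (\<sigma>DD z)) (at z)"
    and \<sigma>DD_cont: "continuous_on U \<sigma>DD"
    unfolding C2_on_def by blast
  have uD_cont: "continuous_on U uD"
    using uD_deriv has_derivative_continuous by (blast intro: continuous_at_imp_continuous_on)
  interpret oldroyd_b \<Omega> u \<sigma> T Wi U uD \<sigma>D \<sigma>DD
    by unfold_locales (fact dom Wi T K_subset_U u_deriv uD_cont \<sigma>_deriv \<sigma>D_deriv \<sigma>DD_cont
        tangential oldroyd)+
  obtain M where M: "bounded_by M"
    by (rule bounded_by_exists)
  show ?thesis
    unfolding Let_def
    by (intro exI[of _ "2 * M * (M + 1)\<^sup>2 * (1 + M * (T + 1))"] allI impI, elim conjE,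
        rule local_step_error_le[OF M uniform_grid_le[OF T]]) assumption+
qed

end
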